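(* Let $\mathcal{S}$ be a set of LU-theories in a common predicate language $\Sigma$, any two of which are language similar. Then the relation $\sqsubseteq^L$ is a partial order on $\mathcal{S}$.
   Context: Theories are complete theories in predicate (relational) languages. A predicate symbol $R$ is non-empty for $T$ if $T\vdash\exists\bar x R(\bar x)$. A theory $T$ in a predicate language $\Sigma$ is language uniform (an LU-theory) if for each arity $n$, every permutation of the set of $n$-ary symbols that are non-empty for $T$ preserves $T$ (i.e., replacing each such symbol by its image maps $T$ onto $T$). Theories $T_0,T_1$ in languages $\Sigma_0,\Sigma_1$ are language similar if $T_0$ can be obtained from $T_1$ by a bijective (arity-preserving) replacement of the symbols of $\Sigma_1$ by the symbols of $\Sigma_0$. For language similar theories $T_1,T_2$ of the same language $\Sigma$, $T_1\sqsubseteq^L T_2$ means: for every $R\in\Sigma$, if $T_1\vdash\exists\bar x R(\bar x)$ then $T_2\vdash\exists\bar x R(\bar x)$. *)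

theory Defs
  imports Main
begin

datatype 'r fm =
    Eq nat nat
  | Rel 'r "nat list"
  | Neg "'r fm"
  | Conj "'r fm" "'r fm"
  | Ex nat "'r fm"

fun wf :: "'r set \<Rightarrow> ('r \<Rightarrow> nat) \<Rightarrow> 'r fm \<Rightarrow> bool" where
  "wf Sig ar (Eq x y) = True"
| "wf Sig ar (Rel R xs) = (R \<in> Sig \<and> length xs = ar R)"
| "wf Sig ar (Neg p) = wf Sig ar p"
| "wf Sig ar (Conj p q) = (wf Sig ar p \<and> wf Sig ar q)"
| "wf Sig ar (Ex x p) = wf Sig ar p"

fun fv :: "'r fm \<Rightarrow> nat set" where
  "fv (Eq x y) = {x, y}"
| "fv (Rel R xs) = set xs"
| "fv (Neg p) = fv p"
| "fv (Conj p q) = fv p \<union> fv q"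
| "fv (Ex x p) = fv p - {x}"

definition sentence :: "'r fm \<Rightarrow> bool" where
  "sentence p \<longleftrightarrow> fv p = {}"

fun sat :: "'d set \<Rightarrow> ('r \<Rightarrow> 'd list \<Rightarrow> bool) \<Rightarrow> (nat \<Rightarrow> 'd) \<Rightarrow> 'r fm \<Rightarrow> bool" where
  "sat D I e (Eq x y) = (e x = e y)"
| "sat D I e (Rel R xs) = I R (map e xs)"
| "sat D I e (Neg p) = (\<not> sat D I e p)"
| "sat D I e (Conj p q) = (sat D I e p \<and> sat D I e q)"
| "sat D I e (Ex x p) = (\<exists>a\<in>D. sat D I (e(x := a)) p)"

definition Th :: "'r set \<Rightarrow> ('r \<Rightarrow> nat) \<Rightarrow> 'd set \<Rightarrow> ('r \<Rightarrow> 'd list \<Rightarrow> bool) \<Rightarrow> 'r fm set" where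
  "Th Sig ar D I = {p. wf Sig ar p \<and> sentence p \<and> (\<forall>e. range e \<subseteq> D \<longrightarrow> sat D I e p)}"

definition complete_theory :: "'d itself \<Rightarrow> 'r set \<Rightarrow> ('r \<Rightarrow> nat) \<Rightarrow> 'r fm set \<Rightarrow> bool" where
  "complete_theory _ Sig ar T \<longleftrightarrow>
     (\<exists>(D::'d set) I. D \<noteq> {} \<and> T = Th Sig ar D I)"

text \<open>The sentence \<exists>x1...xn R(x1,...,xn).\<close>
definition exR :: "('r \<Rightarrow> nat) \<Rightarrow> 'r \<Rightarrow> 'r fm" where
  "exR ar R = foldr Ex [0..<ar R] (Rel R [0..<ar R])"

text \<open>R is non-empty for T. Since T is a complete (deductively closed) theory,
  T proves a sentence iff the sentence belongs to T.\<close>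
definition nonempty_sym :: "('r \<Rightarrow> nat) \<Rightarrow> 'r fm set \<Rightarrow> 'r \<Rightarrow> bool" where
  "nonempty_sym ar T R \<longleftrightarrow> exR ar R \<in> T"

definition LU :: "'r set \<Rightarrow> ('r \<Rightarrow> nat) \<Rightarrow> 'r fm set \<Rightarrow> bool" where
  "LU Sig ar T \<longleftrightarrow>
     (\<forall>n (\<pi>::'r \<Rightarrow> 'r).
        let E = {R \<in> Sig. ar R = n \<and> nonempty_sym ar T R} in
        bij_betw \<pi> E E \<and> (\<forall>x. x \<notin> E \<longrightarrow> \<pi> x = x) \<longrightarrow> map_fm \<pi> ` T = T)"

definition lang_similar :: "'r set \<Rightarrow> ('r \<Rightarrow> nat) \<Rightarrow> 'r fm set \<Rightarrow> 'r fm set \<Rightarrow> bool" where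
  "lang_similar Sig ar T0 T1 \<longleftrightarrow>
     (\<exists>\<sigma>. bij_betw \<sigma> Sig Sig \<and> (\<forall>R\<in>Sig. ar (\<sigma> R) = ar R) \<and> T0 = map_fm \<sigma> ` T1)"

definition leL :: "'r set \<Rightarrow> ('r \<Rightarrow> nat) \<Rightarrow> 'r fm set \<Rightarrow> 'r fm set \<Rightarrow> bool" where
  "leL Sig ar T1 T2 \<longleftrightarrow> (\<forall>R\<in>Sig. nonempty_sym ar T1 R \<longrightarrow> nonempty_sym ar T2 R)"

definition leL_rel :: "'r set \<Rightarrow> ('r \<Rightarrow> nat) \<Rightarrow> 'r fm set set \<Rightarrow> ('r fm set \<times> 'r fm set) set" where
  "leL_rel Sig ar S = {(T1, T2). T1 \<in> S \<and> T2 \<in> S \<and> leL Sig ar T1 T2}"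

end

theory Submission
  imports Defs
begin

text \<open>Reflexivity and transitivity of \<open>\<sqsubseteq>\<^sup>L\<close> are immediate; the content is antisymmetry.
  Let \<open>T\<^sub>1 = \<sigma>(T\<^sub>2)\<close> for a renaming \<open>\<sigma>\<close> of \<open>\<Sigma>\<close>, and suppose \<open>T\<^sub>1\<close> and \<open>T\<^sub>2\<close> have the same
  non-empty symbols. Then \<open>\<sigma>\<close> permutes the non-empty symbols of \<open>T\<^sub>2\<close> of each arity, so by
  language uniformity the restriction of \<open>\<sigma>\<close> to the non-empty symbols of finitely many
  arities maps \<open>T\<^sub>2\<close> onto itself. In a model of \<open>T\<^sub>2\<close> the empty symbols are interpreted as
  empty relations, so on any single sentence \<open>\<sigma>\<close> acts like such a restriction. Hence
  \<open>\<sigma>(T\<^sub>2) \<subseteq> T\<^sub>2\<close>, and since a complete theory has no proper complete extension, \<open>T\<^sub>1 = T\<^sub>2\<close>.\<close>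

lemma sat_map_fm: "sat D I e (map_fm \<sigma> p) = sat D (\<lambda>R. I (\<sigma> R)) e p"
  by (induction p arbitrary: e) auto

lemma fv_map_fm: "fv (map_fm \<sigma> p) = fv p"
  by (induction p) auto

lemma wf_map_fm:
  "wf Sig ar p \<Longrightarrow> \<forall>R\<in>Sig. \<sigma> R \<in> Sig \<and> ar (\<sigma> R) = ar R \<Longrightarrow> wf Sig ar (map_fm \<sigma> p)"
  by (induction p) auto

lemma set_fm_subset_if_wf: "wf Sig ar p \<Longrightarrow> set_fm p \<subseteq> Sig"
  by (induction p) auto

lemma sat_cong_env: "\<forall>x\<in>fv p. e x = e' x \<Longrightarrow> sat D I e p = sat D I e' p"
proof (induction p arbitrary: e e')
  case (Rel R xs)
  then have "map e xs = map e' xs" by simp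
  then show ?case by (simp only: sat.simps)
next
  case (Ex x p)
  have "sat D I (e(x := a)) p = sat D I (e'(x := a)) p" for a
    by (rule Ex.IH) (use Ex.prems in auto)
  then show ?case by simp
next
  case (Conj p q)
  have "sat D I e p = sat D I e' p" by (rule Conj.IH(1)) (use Conj.prems in auto)
  moreover have "sat D I e q = sat D I e' q" by (rule Conj.IH(2)) (use Conj.prems in auto)
  ultimately show ?case by simp
qed auto

lemma sat_cong_interp:
  assumes "wf Sig ar p" "range e \<subseteq> D"
    and "\<forall>R\<in>set_fm p. \<forall>ds. set ds \<subseteq> D \<longrightarrow> length ds = ar R \<longrightarrow> I R ds = J R ds"
  shows "sat D I e p = sat D J e p"
  using assms
proof (induction p arbitrary: e)
  case (Rel R xs)
  then have "set (map e xs) \<subseteq> D" by auto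
  with Rel show ?case by auto
next
  case (Ex x p)
  then have "range (e(x := a)) \<subseteq> D" if "a \<in> D" for a
    using that by auto
  with Ex show ?case by auto
qed auto

lemma fv_foldr_Ex: "fv (foldr Ex xs p) = fv p - set xs"
  by (induction xs) auto

lemma wf_foldr_Ex: "wf Sig ar (foldr Ex xs p) = wf Sig ar p"
  by (induction xs) auto

lemma map_fm_foldr_Ex: "map_fm \<sigma> (foldr Ex xs p) = foldr Ex xs (map_fm \<sigma> p)"
  by (induction xs) auto

lemma sat_foldr_ExI:
  assumes "sat D I e' p" "\<forall>x. x \<notin> set xs \<longrightarrow> e' x = e x" "\<forall>x\<in>set xs. e' x \<in> D"
  shows "sat D I e (foldr Ex xs p)"
  using assms
proof (induction xs arbitrary: e)
  case Nil
  then have "e' = e" by auto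
  with Nil show ?case by simp
next
  case (Cons x xs)
  have "sat D I (e(x := e' x)) (foldr Ex xs p)"
    by (rule Cons.IH) (use Cons.prems in auto)
  with Cons.prems show ?case by auto
qed

lemma map_fm_eq_foldr_Ex_Rel:
  "map_fm \<sigma> p = foldr Ex xs (Rel S ys) \<Longrightarrow> \<exists>R. p = foldr Ex xs (Rel R ys) \<and> \<sigma> R = S"
proof (induction xs arbitrary: p)
  case Nil
  then show ?case by (cases p) auto
next
  case (Cons x xs)
  then show ?case by (cases p) auto
qed

lemma map_fm_exR: "ar (\<sigma> R) = ar R \<Longrightarrow> map_fm \<sigma> (exR ar R) = exR ar (\<sigma> R)"
  by (simp add: exR_def map_fm_foldr_Ex)

lemma exR_in_Th:
  assumes "R \<in> Sig" "I R ds" "set ds \<subseteq> D" "length ds = ar R"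
  shows "exR ar R \<in> Th Sig ar D I"
  unfolding Th_def sentence_def
proof (intro CollectI conjI allI impI)
  show "wf Sig ar (exR ar R)" using assms(1) by (simp add: exR_def wf_foldr_Ex)
  show "fv (exR ar R) = {}" by (auto simp: exR_def fv_foldr_Ex)
  fix e :: "nat \<Rightarrow> _"
  define e' where "e' = (\<lambda>i. if i < ar R then ds ! i else e i)"
  have "map e' [0..<ar R] = ds"
    using assms(4) by (simp add: e'_def list_eq_iff_nth_eq)
  then show "sat D I e (exR ar R)"
    unfolding exR_def
    by (intro sat_foldr_ExI[where e'=e']) (use assms(2-4) in \<open>auto simp: e'_def\<close>)
qed

lemma not_nonempty_sym_ThD:
  assumes "R \<in> Sig" "\<not> nonempty_sym ar (Th Sig ar D I) R" "set ds \<subseteq> D" "length ds = ar R"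
  shows "\<not> I R ds"
  using assms exR_in_Th[of R Sig I ds D ar] by (auto simp: nonempty_sym_def)

lemma Th_subset_imp_eq:
  assumes "D\<^sub>2 \<noteq> {}" and sub: "Th Sig ar D\<^sub>1 I\<^sub>1 \<subseteq> Th Sig ar D\<^sub>2 I\<^sub>2"
  shows "Th Sig ar D\<^sub>1 I\<^sub>1 = Th Sig ar D\<^sub>2 I\<^sub>2"
proof (rule ccontr)
  assume "Th Sig ar D\<^sub>1 I\<^sub>1 \<noteq> Th Sig ar D\<^sub>2 I\<^sub>2"
  with sub obtain p where p: "p \<in> Th Sig ar D\<^sub>2 I\<^sub>2" "p \<notin> Th Sig ar D\<^sub>1 I\<^sub>1" by blast
  then have wf: "wf Sig ar p" and sentence: "sentence p" by (auto simp: Th_def)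
  with p(2) obtain e where "\<not> sat D\<^sub>1 I\<^sub>1 e p" by (auto simp: Th_def)
  with sentence have "\<not> sat D\<^sub>1 I\<^sub>1 e' p" for e'
    using sat_cong_env[of p e e'] by (auto simp: sentence_def)
  with wf sentence have "Neg p \<in> Th Sig ar D\<^sub>1 I\<^sub>1" by (auto simp: Th_def sentence_def)
  with sub have "Neg p \<in> Th Sig ar D\<^sub>2 I\<^sub>2" by blast
  moreover obtain d where "d \<in> D\<^sub>2" using assms(1) by blast
  ultimately show False using p(1) by (auto simp: Th_def)
qed

lemma nonempty_sym_image_map_fm:
  assumes \<sigma>: "bij_betw \<sigma> Sig Sig" "\<forall>R\<in>Sig. ar (\<sigma> R) = ar R"
    and wf: "\<forall>p\<in>T. wf Sig ar p" and R: "R \<in> Sig"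
  shows "nonempty_sym ar (map_fm \<sigma> ` T) (\<sigma> R) \<longleftrightarrow> nonempty_sym ar T R"
proof
  assume "nonempty_sym ar (map_fm \<sigma> ` T) (\<sigma> R)"
  then obtain p where p: "p \<in> T" "map_fm \<sigma> p = exR ar (\<sigma> R)"
    by (auto simp: nonempty_sym_def)
  then obtain R' where R': "p = foldr Ex [0..<ar (\<sigma> R)] (Rel R' [0..<ar (\<sigma> R)])" "\<sigma> R' = \<sigma> R"
    using map_fm_eq_foldr_Ex_Rel[OF p(2)[unfolded exR_def]] by blast
  with wf p(1) have "R' \<in> Sig" by (auto simp: wf_foldr_Ex)
  with R R'(2) \<sigma>(1) have "R' = R" by (auto simp: bij_betw_def inj_on_def)
  with R' R \<sigma>(2) have "p = exR ar R" by (simp add: exR_def)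
  with p(1) show "nonempty_sym ar T R" by (simp add: nonempty_sym_def)
next
  assume "nonempty_sym ar T R"
  then have "map_fm \<sigma> (exR ar R) \<in> map_fm \<sigma> ` T" by (simp add: nonempty_sym_def)
  with R \<sigma>(2) show "nonempty_sym ar (map_fm \<sigma> ` T) (\<sigma> R)"
    by (simp add: map_fm_exR nonempty_sym_def)
qed

lemma bij_betw_restrict_invariant:
  assumes "bij_betw f A A" "\<forall>x\<in>A. P (f x) = P x"
  shows "bij_betw f {x \<in> A. P x} {x \<in> A. P x}"
proof -
  have "f ` {x \<in> A. P x} = {x \<in> A. P x}"
  proof
    show "f ` {x \<in> A. P x} \<subseteq> {x \<in> A. P x}"
      using assms by (auto simp: bij_betw_def)
    show "{x \<in> A. P x} \<subseteq> f ` {x \<in> A. P x}"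
    proof
      fix y assume y: "y \<in> {x \<in> A. P x}"
      then obtain x where "x \<in> A" "y = f x" using assms(1) by (auto simp: bij_betw_def)
      with y assms(2) show "y \<in> f ` {x \<in> A. P x}" by auto
    qed
  qed
  moreover have "inj_on f {x \<in> A. P x}"
    using bij_betw_imp_inj_on[OF assms(1)] by (rule inj_on_subset) auto
  ultimately show ?thesis by (simp add: bij_betw_def)
qed

definition restrict_renaming ::
    "'r set \<Rightarrow> ('r \<Rightarrow> nat) \<Rightarrow> 'r fm set \<Rightarrow> nat set \<Rightarrow> ('r \<Rightarrow> 'r) \<Rightarrow> 'r \<Rightarrow> 'r" where
  "restrict_renaming Sig ar T A \<sigma> R =
     (if R \<in> Sig \<and> nonempty_sym ar T R \<and> ar R \<in> A then \<sigma> R else R)"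

lemma LU_image_map_fm_restrict_renaming:
  assumes LU: "LU Sig ar T"
    and \<sigma>: "bij_betw \<sigma> Sig Sig" "\<forall>R\<in>Sig. ar (\<sigma> R) = ar R"
    and ne: "\<forall>R\<in>Sig. nonempty_sym ar T (\<sigma> R) = nonempty_sym ar T R"
    and "finite A"
  shows "map_fm (restrict_renaming Sig ar T A \<sigma>) ` T = T"
  using \<open>finite A\<close>
proof (induction A rule: finite_induct)
  case empty
  have "restrict_renaming Sig ar T {} \<sigma> = id"
    by (auto simp: restrict_renaming_def)
  then show ?case by (simp add: fm.map_id0[unfolded id_def])
next
  case (insert n A)
  define E where "E = {R \<in> Sig. ar R = n \<and> nonempty_sym ar T R}"
  have \<sigma>_Sig: "\<forall>R\<in>Sig. \<sigma> R \<in> Sig" using \<sigma>(1) by (auto simp: bij_betw_def)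
  have "bij_betw \<sigma> E E"
    unfolding E_def using bij_betw_restrict_invariant[OF \<sigma>(1)] \<sigma>(2) ne by simp
  then have "bij_betw (restrict_renaming Sig ar T {n} \<sigma>) E E"
    by (rule bij_betw_cong[THEN iffD1, rotated]) (auto simp: restrict_renaming_def E_def)
  moreover have "\<forall>R. R \<notin> E \<longrightarrow> restrict_renaming Sig ar T {n} \<sigma> R = R"
    by (auto simp: restrict_renaming_def E_def)
  ultimately have step: "map_fm (restrict_renaming Sig ar T {n} \<sigma>) ` T = T"
    using LU unfolding LU_def Let_def E_def by blast
  have comp: "restrict_renaming Sig ar T (insert n A) \<sigma> =
      restrict_renaming Sig ar T {n} \<sigma> \<circ> restrict_renaming Sig ar T A \<sigma>"
    using insert.hyps(2) \<sigma>(2) \<sigma>_Sig ne by (auto simp: restrict_renaming_def fun_eq_iff)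
  have "map_fm (restrict_renaming Sig ar T (insert n A) \<sigma>) =
      map_fm (restrict_renaming Sig ar T {n} \<sigma>) \<circ> map_fm (restrict_renaming Sig ar T A \<sigma>)"
    by (simp add: comp fun_eq_iff fm.map_comp)
  with step insert.IH show ?case by (simp only: image_comp[symmetric])
qed

lemma sat_map_fm_restrict_renaming:
  assumes T: "T = Th Sig ar D I"
    and \<sigma>: "\<forall>R\<in>Sig. \<sigma> R \<in> Sig \<and> ar (\<sigma> R) = ar R"
    and ne: "\<forall>R\<in>Sig. nonempty_sym ar T (\<sigma> R) = nonempty_sym ar T R"
    and p: "wf Sig ar p" "ar ` set_fm p \<subseteq> A" and e: "range e \<subseteq> D"
  shows "sat D I e (map_fm (restrict_renaming Sig ar T A \<sigma>) p) = sat D I e (map_fm \<sigma> p)"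
  unfolding sat_map_fm
proof (rule sat_cong_interp[OF p(1) e], intro ballI allI impI)
  fix R ds assume R: "R \<in> set_fm p" and ds: "set ds \<subseteq> D" "length ds = ar R"
  have "R \<in> Sig" using R set_fm_subset_if_wf[OF p(1)] by blast
  show "I (restrict_renaming Sig ar T A \<sigma> R) ds = I (\<sigma> R) ds"
  proof (cases "nonempty_sym ar T R")
    case True
    with \<open>R \<in> Sig\<close> R p(2) show ?thesis by (auto simp: restrict_renaming_def)
  next
    case False
    with \<open>R \<in> Sig\<close> ds T have "\<not> I R ds"
      by (simp add: not_nonempty_sym_ThD)
    moreover from False \<open>R \<in> Sig\<close> ds T \<sigma> ne have "\<not> I (\<sigma> R) ds"
      by (metis not_nonempty_sym_ThD)
    ultimately show ?thesis using False by (simp add: restrict_renaming_def)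
  qed
qed

lemma LU_image_map_fm_subset:
  assumes LU: "LU Sig ar T" and T: "T = Th Sig ar D I"
    and \<sigma>: "bij_betw \<sigma> Sig Sig" "\<forall>R\<in>Sig. ar (\<sigma> R) = ar R"
    and ne: "\<forall>R\<in>Sig. nonempty_sym ar T (\<sigma> R) = nonempty_sym ar T R"
  shows "map_fm \<sigma> ` T \<subseteq> T"
proof
  fix q assume "q \<in> map_fm \<sigma> ` T"
  then obtain p where p: "p \<in> T" "q = map_fm \<sigma> p" by blast
  with T have wf: "wf Sig ar p" and sentence: "sentence p" by (auto simp: Th_def)
  have \<sigma>_Sig: "\<forall>R\<in>Sig. \<sigma> R \<in> Sig \<and> ar (\<sigma> R) = ar R"
    using \<sigma> by (auto simp: bij_betw_def)
  let ?\<pi> = "restrict_renaming Sig ar T (ar ` set_fm p) \<sigma>"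
  have "map_fm ?\<pi> p \<in> T"
    using LU_image_map_fm_restrict_renaming[OF LU \<sigma> ne] p(1) by (blast intro: fm.set_finite)
  then have "sat D I e (map_fm \<sigma> p)" if "range e \<subseteq> D" for e
    using sat_map_fm_restrict_renaming[OF T \<sigma>_Sig ne wf _ that] T that by (auto simp: Th_def)
  moreover have "wf Sig ar (map_fm \<sigma> p)" using wf_map_fm[OF wf \<sigma>_Sig] .
  moreover have "sentence (map_fm \<sigma> p)" using sentence by (simp add: sentence_def fv_map_fm)
  ultimately show "q \<in> T" using p(2) T by (auto simp: Th_def)
qed

lemma leL_antisym_if_lang_similar:
  fixes T\<^sub>1 T\<^sub>2 :: "'r fm set"
  assumes c\<^sub>1: "complete_theory TYPE('d) Sig ar T\<^sub>1"
    and c\<^sub>2: "complete_theory TYPE('d) Sig ar T\<^sub>2"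
    and LU: "LU Sig ar T\<^sub>2" and sim: "lang_similar Sig ar T\<^sub>1 T\<^sub>2"
    and "leL Sig ar T\<^sub>1 T\<^sub>2" "leL Sig ar T\<^sub>2 T\<^sub>1"
  shows "T\<^sub>1 = T\<^sub>2"
proof -
  obtain D\<^sub>1 :: "'d set" and I\<^sub>1 where T\<^sub>1: "T\<^sub>1 = Th Sig ar D\<^sub>1 I\<^sub>1"
    using c\<^sub>1 by (auto simp: complete_theory_def)
  obtain D\<^sub>2 :: "'d set" and I\<^sub>2 where "D\<^sub>2 \<noteq> {}" and T\<^sub>2: "T\<^sub>2 = Th Sig ar D\<^sub>2 I\<^sub>2"
    using c\<^sub>2 by (auto simp: complete_theory_def)
  obtain \<sigma> where \<sigma>: "bij_betw \<sigma> Sig Sig" "\<forall>R\<in>Sig. ar (\<sigma> R) = ar R"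
    and T\<^sub>1_eq: "T\<^sub>1 = map_fm \<sigma> ` T\<^sub>2"
    using sim by (auto simp: lang_similar_def)
  have same_nonempty: "nonempty_sym ar T\<^sub>1 R = nonempty_sym ar T\<^sub>2 R" if "R \<in> Sig" for R
    using that assms(5,6) by (auto simp: leL_def)
  have "nonempty_sym ar T\<^sub>2 (\<sigma> R) = nonempty_sym ar T\<^sub>2 R" if "R \<in> Sig" for R
  proof -
    have "\<sigma> R \<in> Sig" using that \<sigma>(1) by (auto simp: bij_betw_def)
    then have "nonempty_sym ar T\<^sub>2 (\<sigma> R) = nonempty_sym ar T\<^sub>1 (\<sigma> R)"
      by (simp add: same_nonempty)
    also have "\<dots> = nonempty_sym ar T\<^sub>2 R"
      unfolding T\<^sub>1_eq using nonempty_sym_image_map_fm[OF \<sigma>] that T\<^sub>2 by (auto simp: Th_def)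
    finally show ?thesis .
  qed
  then have "T\<^sub>1 \<subseteq> T\<^sub>2"
    unfolding T\<^sub>1_eq using LU_image_map_fm_subset[OF LU T\<^sub>2 \<sigma>] by blast
  then show ?thesis
    unfolding T\<^sub>1 T\<^sub>2 using Th_subset_imp_eq[OF \<open>D\<^sub>2 \<noteq> {}\<close>] by blast
qed

theorem proposition4p4:
  fixes Sig :: "'r set" and ar :: "'r \<Rightarrow> nat" and S :: "'r fm set set"
  assumes "\<forall>T\<in>S. complete_theory TYPE('d) Sig ar T"
      and "\<forall>T\<in>S. LU Sig ar T"
      and "\<forall>T1\<in>S. \<forall>T2\<in>S. lang_similar Sig ar T1 T2"
  shows "partial_order_on S (leL_rel Sig ar S)"
proof -
  have "antisym (leL_rel Sig ar S)"
  proof (rule antisymI)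
    fix T\<^sub>1 T\<^sub>2 assume "(T\<^sub>1, T\<^sub>2) \<in> leL_rel Sig ar S" "(T\<^sub>2, T\<^sub>1) \<in> leL_rel Sig ar S"
    with assms show "T\<^sub>1 = T\<^sub>2"
      using leL_antisym_if_lang_similar[of Sig ar T\<^sub>1 T\<^sub>2] by (auto simp: leL_rel_def)
  qed
  then show ?thesis
    by (auto simp: partial_order_on_def preorder_on_def refl_on_def trans_def leL_rel_def leL_def)
qed

end
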